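(* Let $n\geq3$, let $o_1,o_2$ be two non-parallel $\mathcal{O}_n$-directions, write $o_1=\alpha+\beta\zeta_n$, $o_2=\gamma+\delta\zeta_n$ with $\alpha,\beta,\gamma,\delta\in\mathbb{Z}[\zeta_n+\bar\zeta_n]$, and let $M_{\{o_1,o_2\}}=\operatorname{lin}_{\mathbb{Z}[\zeta_n+\bar\zeta_n]}\left(\left\{\frac{o_1}{\alpha\delta-\beta\gamma},\frac{o_2}{\alpha\delta-\beta\gamma}\right\}\right)$. Then $\mathcal{O}_n$ is a subgroup of $M_{\{o_1,o_2\}}$ and the subgroup index $[M_{\{o_1,o_2\}}:\mathcal{O}_n]$ is finite. Hence there are $c\in\mathbb{N}$ and $t_1,\dots,t_c\in M_{\{o_1,o_2\}}$, where one may take $t_1=0$, such that $M_{\{o_1,o_2\}}=\dot{\bigcup}_{i=1}^c(t_i+\mathcal{O}_n)$ (disjoint union), and consequently every subset $G\subset M_{\{o_1,o_2\}}$ satisfies $G=\dot{\bigcup}_{i=1}^c\bigl(G\cap(t_i+\mathcal{O}_n)\bigr)$.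
   Context: $\zeta_n$ is a primitive $n$th root of unity in $\mathbb{C}$, $\bar\zeta_n$ its complex conjugate, $\mathcal{O}_n=\mathbb{Z}[\zeta_n]$. An $\mathcal{O}_n$-direction is an element of $\mathcal{O}_n\setminus\{0\}$. The coefficients $\alpha,\beta,\gamma,\delta$ are uniquely determined, and $\alpha\delta-\beta\gamma\ne0$. $\operatorname{lin}_R(S)$ is the set of $R$-linear combinations of elements of $S$. *)

theory Defs
  imports Complex_Main
begin

definition prim_root :: "nat \<Rightarrow> complex \<Rightarrow> bool" where
  "prim_root n z \<longleftrightarrow> z ^ n = 1 \<and> (\<forall>k. 0 < k \<and> k < n \<longrightarrow> z ^ k \<noteq> 1)"

definition int_adjoin :: "complex \<Rightarrow> complex set" where
  "int_adjoin x = {(\<Sum>k\<le>m. of_int (a k) * x ^ k) | (a :: nat \<Rightarrow> int) m. True}"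

definition lin :: "complex set \<Rightarrow> complex set \<Rightarrow> complex set" where
  "lin R S = {(\<Sum>s\<in>F. c s * s) | F c. finite F \<and> F \<subseteq> S \<and> (\<forall>s\<in>F. c s \<in> R)}"

definition parallel :: "complex \<Rightarrow> complex \<Rightarrow> bool" where
  "parallel u v \<longleftrightarrow> (\<exists>r::real. u = of_real r * v \<or> v = of_real r * u)"

end

(*
  Write O = Z[z], R = Z[z + cnj z] and D = alpha delta - beta gamma; D is nonzero because
  alpha, ..., delta are real and o1, o2 are not parallel.  As |z| = 1 we have
  z^2 = (z + cnj z) z - 1, so every element of O is a + b z with a, b in R, and Cramer's rule
  writes a + b z as an R-combination of o1/D and o2/D: hence O is contained in M.  Conversely
  M lies in (1/D) O.  The powers of D lie in the Q-span of 1, z, ..., z^(n-1), so D is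
  algebraic, and dividing an integer relation for D by D gives a positive integer N with
  N/D in O.  Since O is generated as a group by the z^j (j < n), every element of (1/D) O is
  congruent modulo O to a combination of the z^j/D with coefficients in {0, ..., N-1}.  So O
  has finite index in M, and listing the cosets with O itself first gives the decomposition.
*)

theory Submission
  imports Defs "HOL-Computational_Algebra.Polynomial" "HOL-Library.FuncSet"
begin

section \<open>Additive subgroups and their cosets\<close>

locale add_subgroup =
  fixes S :: "'a::ab_group_add set"
  assumes zero_mem: "0 \<in> S"
    and add_mem: "a \<in> S \<Longrightarrow> b \<in> S \<Longrightarrow> a + b \<in> S"
    and uminus_mem: "a \<in> S \<Longrightarrow> - a \<in> S"
begin

lemma diff_mem: "a \<in> S \<Longrightarrow> b \<in> S \<Longrightarrow> a - b \<in> S"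
  using add_mem[of a "- b"] uminus_mem by simp

lemma sum_mem: "(\<And>i. i \<in> A \<Longrightarrow> f i \<in> S) \<Longrightarrow> sum f A \<in> S"
  by (induction A rule: infinite_finite_induct) (auto intro: zero_mem add_mem)

lemma coset_eq: "t - s \<in> S \<Longrightarrow> (+) t ` S = (+) s ` S"
proof safe
  fix x assume "t - s \<in> S" "x \<in> S"
  then show "t + x \<in> (+) s ` S" "s + x \<in> (+) t ` S"
    using add_mem diff_mem by (force simp: image_iff algebra_simps)+
qed

lemma cosets_disjoint:
  assumes "(+) s ` S \<noteq> (+) t ` S"
  shows "(+) s ` S \<inter> (+) t ` S = {}"
proof (rule ccontr)
  assume "(+) s ` S \<inter> (+) t ` S \<noteq> {}"
  then obtain a b where "a \<in> S" "b \<in> S" "s + a = t + b" by blast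
  moreover from \<open>s + a = t + b\<close> have "s - t = b - a"
    by (metis add.commute add_diff_cancel_right' diff_diff_eq)
  ultimately have "s - t \<in> S" using diff_mem by simp
  with assms coset_eq show False by blast
qed

end

lemma (in add_subgroup) coset_representatives:
  assumes "add_subgroup M" "S \<subseteq> M" "finite {(+) t ` S | t. t \<in> M}"
  obtains c :: nat and t where "c \<ge> 1" "t 1 = 0" "\<forall>i\<in>{1..c}. t i \<in> M"
    "M = (\<Union>i\<in>{1..c}. (+) (t i) ` S)"
    "\<forall>i\<in>{1..c}. \<forall>j\<in>{1..c}. i \<noteq> j \<longrightarrow> (+) (t i) ` S \<inter> (+) (t j) ` S = {}"
proof -
  interpret M: add_subgroup M by fact
  define C where "C = {(+) t ` S | t. t \<in> M}"
  obtain xs where xs: "set xs = C - {S}" "distinct xs"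
    using finite_distinct_list[of "C - {S}"] assms(3) unfolding C_def by blast
  define T where "T = S # xs"
  define c where "c = length T"
  have "S \<in> C" unfolding C_def using M.zero_mem by force
  then have T: "set T = C" "distinct T" using xs unfolding T_def by auto
  have "\<forall>X\<in>C. \<exists>t. t \<in> M \<and> X = (+) t ` S" unfolding C_def by blast
  then obtain r where r: "\<And>X. X \<in> C \<Longrightarrow> r X \<in> M \<and> X = (+) (r X) ` S"
    by (auto dest!: bchoice)
  define t where "t i = (if i = 1 then 0 else r (T ! (i - 1)))" for i
  have t: "t i \<in> M" "(+) (t i) ` S = T ! (i - 1)" if "i \<in> {1..c}" for i
  proof -
    have "T ! (i - 1) \<in> C" using that T(1) unfolding c_def by auto
    then show "t i \<in> M" "(+) (t i) ` S = T ! (i - 1)"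
      using r M.zero_mem by (auto simp: t_def T_def)
  qed
  have M_eq: "M = (\<Union>i\<in>{1..c}. (+) (t i) ` S)"
  proof
    show "M \<subseteq> (\<Union>i\<in>{1..c}. (+) (t i) ` S)"
    proof
      fix y assume "y \<in> M"
      then have "(+) y ` S \<in> set T" using T(1) unfolding C_def by blast
      then obtain k where "k < c" "T ! k = (+) y ` S" unfolding c_def by (metis in_set_conv_nth)
      moreover have "y \<in> (+) y ` S" using zero_mem by force
      ultimately show "y \<in> (\<Union>i\<in>{1..c}. (+) (t i) ` S)"
        using t(2)[of "Suc k"] by (intro UN_I[of "Suc k"]) auto
    qed
    show "(\<Union>i\<in>{1..c}. (+) (t i) ` S) \<subseteq> M"
      using t(1) assms(2) M.add_mem by blast
  qed
  have disjoint: "(+) (t i) ` S \<inter> (+) (t j) ` S = {}" if "i \<in> {1..c}" "j \<in> {1..c}" "i \<noteq> j" for i j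
  proof (rule cosets_disjoint)
    have "T ! (i - 1) \<noteq> T ! (j - 1)" using that T(2) unfolding c_def by (auto simp: nth_eq_iff_index_eq)
    then show "(+) (t i) ` S \<noteq> (+) (t j) ` S" using t(2) that by simp
  qed
  show thesis
  proof (rule that[of c t])
    show "c \<ge> 1" "t 1 = 0" unfolding c_def T_def t_def by simp_all
  qed (use t(1) M_eq disjoint in auto)
qed

lemma add_subgroup_of_int_mult_mem:
  fixes x :: "'a::ring_1"
  assumes "add_subgroup S" "x \<in> S"
  shows "of_int k * x \<in> S"
proof -
  interpret add_subgroup S by fact
  have "of_nat m * x \<in> S" for m
    by (induction m) (auto simp: algebra_simps intro: zero_mem add_mem assms(2))
  then show ?thesis by (cases k rule: int_cases) (auto simp del: of_nat_Suc intro: uminus_mem)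
qed

lemma finite_cosets_of_int_combinations:
  fixes g :: "'i \<Rightarrow> 'a::ring_1"
  assumes "add_subgroup H" "finite J" "N > 0" "\<And>j. j \<in> J \<Longrightarrow> of_int N * g j \<in> H"
  shows "finite {(+) t ` H | t. \<exists>c. t = (\<Sum>j\<in>J. of_int (c j) * g j)}"
proof -
  interpret add_subgroup H by fact
  define val where "val c = (\<Sum>j\<in>J. of_int (c j) * g j)" for c :: "'i \<Rightarrow> int"
  have "(+) (val c) ` H \<in> (\<lambda>c. (+) (val c) ` H) ` (J \<rightarrow>\<^sub>E {0..<N})" for c
  proof
    define r where "r = restrict (\<lambda>j. c j mod N) J"
    show "r \<in> J \<rightarrow>\<^sub>E {0..<N}" unfolding r_def using assms(3) by auto
    have "val c - val r = (\<Sum>j\<in>J. of_int (c j div N) * (of_int N * g j))"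
      unfolding val_def r_def sum_subtractf[symmetric]
    proof (rule sum.cong)
      fix j assume "j \<in> J"
      have "c j - c j mod N = c j div N * N" by (simp add: minus_mod_eq_div_mult)
      then show "of_int (c j) * g j - of_int (restrict (\<lambda>j. c j mod N) J j) * g j
                 = of_int (c j div N) * (of_int N * g j)"
        using \<open>j \<in> J\<close> by (simp flip: left_diff_distrib of_int_diff add: mult.assoc)
    qed simp
    also have "\<dots> \<in> H"
      by (intro sum_mem add_subgroup_of_int_mult_mem[OF assms(1)] assms(4))
    finally show "(+) (val c) ` H = (+) (val r) ` H" by (rule coset_eq)
  qed
  then have "{(+) t ` H | t. \<exists>c. t = val c} \<subseteq> (\<lambda>c. (+) (val c) ` H) ` (J \<rightarrow>\<^sub>E {0..<N})"
    by blast
  moreover have "finite (J \<rightarrow>\<^sub>E {0..<N})" using assms(2) by (intro finite_PiE) auto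
  ultimately show ?thesis unfolding val_def by (blast intro: finite_subset)
qed

lemma add_subgroup_pair_combinations:
  fixes e1 e2 :: "'a::ring"
  assumes "add_subgroup R"
  shows "add_subgroup {a * e1 + b * e2 | a b. a \<in> R \<and> b \<in> R}" (is "add_subgroup ?E")
proof -
  interpret add_subgroup R by fact
  show ?thesis
  proof unfold_locales
    show "0 \<in> ?E" using zero_mem by force
  next
    fix x y assume "x \<in> ?E" "y \<in> ?E"
    then obtain a b c d where "x = a * e1 + b * e2" "y = c * e1 + d * e2"
      and "a \<in> R" "b \<in> R" "c \<in> R" "d \<in> R"
      by blast
    moreover have "x + y = (a + c) * e1 + (b + d) * e2" "- x = (- a) * e1 + (- b) * e2"
      using calculation by (simp_all add: algebra_simps)
    ultimately show "x + y \<in> ?E" "- x \<in> ?E"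
      using add_mem uminus_mem by blast+
  qed
qed


section \<open>Subrings and the rings generated by one element\<close>

locale subring = add_subgroup S for S :: "'a::ring_1 set" +
  assumes one_mem: "1 \<in> S"
    and mult_mem: "a \<in> S \<Longrightarrow> b \<in> S \<Longrightarrow> a * b \<in> S"
begin

lemma power_mem: "a \<in> S \<Longrightarrow> a ^ k \<in> S"
  by (induction k) (auto intro: one_mem mult_mem)

lemma of_int_mem: "of_int k \<in> S"
  using add_subgroup_of_int_mult_mem[OF add_subgroup_axioms one_mem] by simp

end

lemma subring_Reals: "subring (\<real> :: 'a::real_algebra_1 set)"
  by unfold_locales auto

lemma subring_quadratic_extension:
  fixes z :: "'a::comm_ring_1"
  assumes "subring R" "p \<in> R" "q \<in> R" "z ^ 2 = p * z + q"
  shows "subring {a + b * z | a b. a \<in> R \<and> b \<in> R}" (is "subring ?E")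
proof -
  interpret subring R by fact
  have mem_E: "a + b * z \<in> ?E" if "a \<in> R" "b \<in> R" for a b
    using that by blast
  show ?thesis
  proof unfold_locales
    show "0 \<in> ?E" using mem_E[OF zero_mem zero_mem] by simp
    show "1 \<in> ?E" using mem_E[OF one_mem zero_mem] by simp
  next
    fix x y assume "x \<in> ?E" "y \<in> ?E"
    then obtain a b c d where x: "x = a + b * z" "a \<in> R" "b \<in> R"
      and y: "y = c + d * z" "c \<in> R" "d \<in> R" by blast
    have eqs: "x + y = (a + c) + (b + d) * z" "- x = - a + - b * z"
      "x * y = (a * c + b * d * q) + (a * d + b * c + b * d * p) * z"
      using x y assms(4) by (simp_all add: algebra_simps power2_eq_square)
    show "x + y \<in> ?E" unfolding eqs by (intro mem_E add_mem x(2,3) y(2,3))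
    show "- x \<in> ?E" unfolding eqs by (intro mem_E uminus_mem x(2,3))
    show "x * y \<in> ?E" unfolding eqs by (intro mem_E add_mem mult_mem x(2,3) y(2,3) assms(2,3))
  qed
qed

lemma int_adjoin_eq_poly: "int_adjoin x = {poly p x | p. \<forall>i. coeff p i \<in> \<int>}"
proof safe
  fix y assume "y \<in> int_adjoin x"
  then obtain a m where y: "y = (\<Sum>k\<le>m. of_int (a k) * x ^ k)"
    unfolding int_adjoin_def by auto
  define p where "p = (\<Sum>k\<le>m. monom (of_int (a k) :: complex) k)"
  have "poly p x = y" unfolding p_def y by (simp add: poly_sum poly_monom)
  moreover have "\<forall>i. coeff p i \<in> \<int>" unfolding p_def
    by (auto simp: coeff_sum)
  ultimately show "\<exists>p. y = poly p x \<and> (\<forall>i. coeff p i \<in> \<int>)" by auto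
next
  fix p :: "complex poly" assume "\<forall>i. coeff p i \<in> \<int>"
  then have "\<forall>i. \<exists>k. coeff p i = of_int k" by (auto elim: Ints_cases)
  then obtain a where "\<And>i. coeff p i = of_int (a i)" by (auto dest: choice)
  then have "poly p x = (\<Sum>k\<le>degree p. of_int (a k) * x ^ k)" by (simp add: poly_altdef)
  then show "poly p x \<in> int_adjoin x" unfolding int_adjoin_def by blast
qed

lemma subring_int_adjoin: "subring (int_adjoin x)"
proof unfold_locales
  fix a b assume "a \<in> int_adjoin x" "b \<in> int_adjoin x"
  then obtain p q where a: "a = poly p x" "\<forall>i. coeff p i \<in> \<int>"
    and b: "b = poly q x" "\<forall>i. coeff q i \<in> \<int>"
    unfolding int_adjoin_eq_poly by auto
  show "a + b \<in> int_adjoin x" unfolding int_adjoin_eq_poly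
    by (intro CollectI exI[of _ "p + q"]) (use a b in auto)
  show "- a \<in> int_adjoin x" unfolding int_adjoin_eq_poly
    by (intro CollectI exI[of _ "- p"]) (use a in auto)
  show "a * b \<in> int_adjoin x" unfolding int_adjoin_eq_poly
    by (intro CollectI exI[of _ "p * q"]) (use a b in \<open>auto simp: coeff_mult\<close>)
next
  show "0 \<in> int_adjoin x" unfolding int_adjoin_eq_poly by (intro CollectI exI[of _ 0]) auto
  show "1 \<in> int_adjoin x" unfolding int_adjoin_eq_poly by (intro CollectI exI[of _ 1]) auto
qed

lemma self_mem_int_adjoin: "x \<in> int_adjoin x"
proof -
  have "x = (\<Sum>k\<le>1. of_int (if k = 1 then 1 else 0) * x ^ k)" by simp
  then show ?thesis unfolding int_adjoin_def
    by (intro CollectI exI[of _ "\<lambda>k. if k = 1 then 1 else 0"] exI[of _ 1]) simp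
qed

lemma int_adjoin_minimal:
  assumes "subring S" "x \<in> S"
  shows "int_adjoin x \<subseteq> S"
proof -
  interpret subring S by fact
  show ?thesis unfolding int_adjoin_def by (auto intro!: sum_mem mult_mem of_int_mem power_mem assms(2))
qed

lemma int_adjoin_subset_Reals: "x \<in> \<real> \<Longrightarrow> int_adjoin x \<subseteq> \<real>"
  by (rule int_adjoin_minimal[OF subring_Reals])


section \<open>Roots of unity\<close>

lemma root_of_unity_mult_cnj:
  assumes "z ^ n = 1" "0 < n"
  shows "z * cnj z = 1"
proof -
  have "norm z = 1" using assms power_eq_1_iff by blast
  then show ?thesis using complex_norm_square[of z] by simp
qed

lemma cnj_root_of_unity:
  assumes "z ^ n = 1" "0 < n"
  shows "cnj z = z ^ (n - 1)"
proof -
  have "z * z ^ (n - 1) = z * cnj z"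
    using assms root_of_unity_mult_cnj by (simp flip: power_Suc)
  moreover have "z \<noteq> 0" using assms by (auto simp: power_0_left)
  ultimately show ?thesis by simp
qed

lemma int_adjoin_trace_subset:
  assumes "z ^ n = 1" "0 < n"
  shows "int_adjoin (z + cnj z) \<subseteq> int_adjoin z"
proof (rule int_adjoin_minimal[OF subring_int_adjoin])
  interpret subring "int_adjoin z" by (rule subring_int_adjoin)
  show "z + cnj z \<in> int_adjoin z"
    unfolding cnj_root_of_unity[OF assms] by (intro add_mem power_mem self_mem_int_adjoin)
qed

lemma int_adjoin_subset_trace_combinations:
  assumes "z * cnj z = 1"
  shows "int_adjoin z \<subseteq> {a + b * z | a b. a \<in> int_adjoin (z + cnj z) \<and> b \<in> int_adjoin (z + cnj z)}"
proof (rule int_adjoin_minimal)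
  interpret R: subring "int_adjoin (z + cnj z)" by (rule subring_int_adjoin)
  have "z ^ 2 = (z + cnj z) * z + - 1" using assms by (simp add: algebra_simps power2_eq_square)
  then show "subring {a + b * z | a b. a \<in> int_adjoin (z + cnj z) \<and> b \<in> int_adjoin (z + cnj z)}"
    using subring_quadratic_extension subring_int_adjoin self_mem_int_adjoin R.uminus_mem R.one_mem
    by blast
  show "z \<in> {a + b * z | a b. a \<in> int_adjoin (z + cnj z) \<and> b \<in> int_adjoin (z + cnj z)}"
    using R.zero_mem R.one_mem by force
qed

lemma int_adjoin_root_of_unity_sum:
  assumes "z ^ n = 1" "0 < n" "x \<in> int_adjoin z"
  obtains c :: "nat \<Rightarrow> int" where "x = (\<Sum>j<n. of_int (c j) * z ^ j)"
proof -
  obtain a m where x: "x = (\<Sum>k\<le>m. of_int (a k) * z ^ k)"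
    using assms(3) unfolding int_adjoin_def by blast
  have "z ^ k = z ^ (k mod n)" for k
    by (metis assms(1) div_mult_mod_eq mult.commute power_add power_mult power_one mult_1)
  then have "x = (\<Sum>k\<le>m. of_int (a k) * z ^ (k mod n))" unfolding x by simp
  also have "\<dots> = (\<Sum>j<n. \<Sum>k | k \<in> {..m} \<and> k mod n = j. of_int (a k) * z ^ (k mod n))"
    using assms(2) by (intro sum.group[symmetric]) auto
  also have "\<dots> = (\<Sum>j<n. of_int (\<Sum>k | k \<in> {..m} \<and> k mod n = j. a k) * z ^ j)"
    by (simp add: sum_distrib_right)
  finally show ?thesis by (rule that)
qed


section \<open>Integer multiples of inverses\<close>

interpretation rat_vs: vector_space "\<lambda>(q::rat) (x::complex). of_rat q * x"
  by unfold_locales (auto simp: algebra_simps of_rat_add of_rat_mult)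

lemma int_adjoin_subset_rat_span:
  assumes "z ^ n = 1" "0 < n"
  shows "int_adjoin z \<subseteq> rat_vs.span ((^) z ` {..<n})"
proof
  fix x assume "x \<in> int_adjoin z"
  then obtain c where "x = (\<Sum>j<n. of_int (c j) * z ^ j)"
    using int_adjoin_root_of_unity_sum[OF assms] by blast
  also have "\<dots> = (\<Sum>j<n. of_rat (of_int (c j)) * z ^ j)" by simp
  also have "\<dots> \<in> rat_vs.span ((^) z ` {..<n})"
    by (intro rat_vs.span_sum rat_vs.span_scale rat_vs.span_base) auto
  finally show "x \<in> rat_vs.span ((^) z ` {..<n})" .
qed

lemma algebraic_if_powers_in_finite_rat_span:
  assumes "finite T" "\<And>i. x ^ i \<in> rat_vs.span T"
  shows "algebraic x"
proof (cases "inj_on ((^) x) {..card T}")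
  case False
  then obtain i j where "i \<noteq> j" "x ^ i = x ^ j" by (auto simp: inj_on_def)
  then show ?thesis
    by (intro algebraicI[of "monom 1 i - monom 1 j"])
       (auto simp: poly_monom monom_eq_iff')
next
  case True
  let ?P = "(^) x ` {..card T}"
  have "rat_vs.dependent ?P"
  proof (rule ccontr)
    assume "\<not> rat_vs.dependent ?P"
    then have "card ?P \<le> card T"
      using rat_vs.independent_span_bound[OF assms(1)] assms(2) by blast
    with True show False by (simp add: card_image)
  qed
  then obtain u where u: "\<exists>v\<in>?P. u v \<noteq> 0" "(\<Sum>v\<in>?P. of_rat (u v) * v) = 0"
    by (auto simp: rat_vs.dependent_finite)
  define p where "p = (\<Sum>i\<le>card T. monom (of_rat (u (x ^ i)) :: complex) i)"
  have coeff_p: "coeff p i = (if i \<le> card T then of_rat (u (x ^ i)) else 0)" for i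
    by (simp add: p_def coeff_sum)
  have "poly p x = (\<Sum>v\<in>?P. of_rat (u v) * v)"
    using True by (simp add: p_def poly_sum poly_monom sum.reindex)
  moreover have "p \<noteq> 0" using u(1) coeff_p by (metis atMost_iff image_iff of_rat_eq_0_iff coeff_0)
  moreover have "\<forall>i. coeff p i \<in> \<rat>" using coeff_p by simp
  ultimately show ?thesis
    unfolding algebraic_altdef using u(2) by auto
qed

lemma int_poly_root_with_nonzero_constant:
  fixes x :: "'a::idom"
  assumes "\<forall>i. coeff p i \<in> \<int>" "p \<noteq> 0" "poly p x = 0" "x \<noteq> 0"
  shows "\<exists>q. (\<forall>i. coeff q i \<in> \<int>) \<and> coeff q 0 \<noteq> 0 \<and> poly q x = 0"
  using assms
proof (induction p)
  case (pCons a p)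
  show ?case
  proof (cases "a = 0")
    case True
    have "\<forall>i. coeff p i \<in> \<int>" using pCons.prems(1) by (metis coeff_pCons_Suc)
    moreover have "p \<noteq> 0" using True pCons.prems(2) by auto
    moreover have "poly p x = 0" using True pCons.prems(3,4) by simp
    ultimately show ?thesis using pCons.IH pCons.prems(4) by blast
  next
    case False
    then show ?thesis using pCons.prems(1,3) by (intro exI[of _ "pCons a p"]) auto
  qed
qed simp

lemma algebraic_int_div_mem:
  fixes S :: "complex set"
  assumes "subring S" "x \<in> S" "x \<noteq> 0" "algebraic x"
  shows "\<exists>N::int. N > 0 \<and> of_int N / x \<in> S"
proof -
  interpret subring S by fact
  obtain q where q: "\<forall>i. coeff q i \<in> \<int>" "coeff q 0 \<noteq> 0" "poly q x = 0"
    using assms(3,4) int_poly_root_with_nonzero_constant by (metis algebraicE)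
  obtain r where r: "q = pCons (coeff q 0) r" by (metis coeff_pCons_0 pCons_cases)
  obtain a where a: "coeff q 0 = of_int a" using q(1) by (meson Ints_cases)
  have "\<forall>i. coeff r i \<in> \<int>" using q(1) r by (metis coeff_pCons_Suc)
  then have "poly r x \<in> S"
    using int_adjoin_minimal[OF assms(1,2)] unfolding int_adjoin_eq_poly by blast
  moreover have "of_int a / x = - poly r x"
    using q(3) assms(3) a by (subst (asm) r) (simp add: field_simps add_eq_0_iff)
  ultimately have "of_int a / x \<in> S" "of_int (- a) / x \<in> S"
    using uminus_mem by auto
  moreover have "a \<noteq> 0" using a q(2) by auto
  ultimately show ?thesis by (metis abs_if zero_less_abs_iff)
qed

lemma finite_cosets_div_int_adjoin:
  assumes "z ^ n = 1" "0 < n" "D \<in> int_adjoin z" "D \<noteq> 0"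
  shows "finite {(+) t ` int_adjoin z | t. t \<in> (\<lambda>x. x / D) ` int_adjoin z}"
proof -
  interpret subring "int_adjoin z" by (rule subring_int_adjoin)
  have "algebraic D"
    using int_adjoin_subset_rat_span[OF assms(1,2)] power_mem[OF assms(3)]
    by (intro algebraic_if_powers_in_finite_rat_span[of "(^) z ` {..<n}"]) auto
  then obtain N :: int where N: "N > 0" "of_int N / D \<in> int_adjoin z"
    using algebraic_int_div_mem[OF subring_int_adjoin assms(3,4)] by blast
  have N_mult: "of_int N * (z ^ j / D) \<in> int_adjoin z" for j
  proof -
    have "of_int N * (z ^ j / D) = of_int N / D * z ^ j" by simp
    then show ?thesis by (metis N(2) mult_mem power_mem self_mem_int_adjoin)
  qed
  have "finite {(+) t ` int_adjoin z | t. \<exists>c. t = (\<Sum>j<n. of_int (c j) * (z ^ j / D))}"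
    by (rule finite_cosets_of_int_combinations[OF add_subgroup_axioms finite_lessThan N(1)]) (rule N_mult)
  moreover have "{(+) t ` int_adjoin z | t. t \<in> (\<lambda>x. x / D) ` int_adjoin z}
      \<subseteq> {(+) t ` int_adjoin z | t. \<exists>c. t = (\<Sum>j<n. of_int (c j) * (z ^ j / D))}"
  proof safe
    fix x assume "x \<in> int_adjoin z"
    then obtain c where "x = (\<Sum>j<n. of_int (c j) * z ^ j)"
      using int_adjoin_root_of_unity_sum[OF assms(1,2)] by blast
    then have "x / D = (\<Sum>j<n. of_int (c j) * (z ^ j / D))"
      by (simp add: sum_divide_distrib)
    then show "\<exists>t. (+) (x / D) ` int_adjoin z = (+) t ` int_adjoin z
                 \<and> (\<exists>c. t = (\<Sum>j<n. of_int (c j) * (z ^ j / D)))"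
      by blast
  qed
  ultimately show ?thesis by (rule finite_subset[rotated])
qed


section \<open>The module spanned by two directions\<close>

lemma lin_pair:
  assumes "0 \<in> R" "e1 \<noteq> e2"
  shows "lin R {e1, e2} = {a * e1 + b * e2 | a b. a \<in> R \<and> b \<in> R}"
proof (intro equalityI subsetI)
  fix x assume "x \<in> lin R {e1, e2}"
  then obtain F c where F: "x = (\<Sum>s\<in>F. c s * s)" "F \<subseteq> {e1, e2}" "\<forall>s\<in>F. c s \<in> R"
    unfolding lin_def by blast
  define c' where "c' s = (if s \<in> F then c s else 0)" for s
  have "x = (\<Sum>s\<in>{e1, e2}. c' s * s)"
    unfolding F(1) using F(2) by (intro sum.mono_neutral_cong_left) (auto simp: c'_def)
  also have "\<dots> = c' e1 * e1 + c' e2 * e2" using assms(2) by simp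
  finally have "x = c' e1 * e1 + c' e2 * e2" .
  moreover have "c' e1 \<in> R" "c' e2 \<in> R" using F(3) assms(1) by (simp_all add: c'_def)
  ultimately show "x \<in> {a * e1 + b * e2 | a b. a \<in> R \<and> b \<in> R}" by blast
next
  fix x assume "x \<in> {a * e1 + b * e2 | a b. a \<in> R \<and> b \<in> R}"
  then obtain a b where "a \<in> R" "b \<in> R" "x = (\<Sum>s\<in>{e1, e2}. (if s = e1 then a else b) * s)"
    using assms(2) by auto
  then show "x \<in> lin R {e1, e2}" unfolding lin_def
    by (intro CollectI exI[of _ "{e1, e2}"] exI[of _ "\<lambda>s. if s = e1 then a else b"]) auto
qed

lemma det_nonzero_if_not_parallel:
  assumes "\<alpha> \<in> \<real>" "\<beta> \<in> \<real>" "\<gamma> \<in> \<real>" "\<delta> \<in> \<real>"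
    and "\<alpha> + \<beta> * z \<noteq> 0" "\<not> parallel (\<alpha> + \<beta> * z) (\<gamma> + \<delta> * z)"
  shows "\<alpha> * \<delta> - \<beta> * \<gamma> \<noteq> 0"
proof
  assume "\<alpha> * \<delta> - \<beta> * \<gamma> = 0"
  then have "\<alpha> * (\<gamma> + \<delta> * z) = \<gamma> * (\<alpha> + \<beta> * z)" "\<beta> * (\<gamma> + \<delta> * z) = \<delta> * (\<alpha> + \<beta> * z)"
    by (simp_all add: algebra_simps)
  moreover have "\<alpha> \<noteq> 0 \<or> \<beta> \<noteq> 0" using assms(5) by auto
  ultimately obtain p q where "p \<in> \<real>" "q \<in> \<real>" "p \<noteq> 0" "\<gamma> + \<delta> * z = q / p * (\<alpha> + \<beta> * z)"
    using assms(1-4) by (metis nonzero_mult_div_cancel_left times_divide_eq_left)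
  then show False
    using assms(6) unfolding parallel_def by (metis Reals_cases Reals_divide)
qed

lemma cramer_subset_pair_combinations:
  fixes z :: "'a::field"
  assumes "subring R" "\<alpha> \<in> R" "\<beta> \<in> R" "\<gamma> \<in> R" "\<delta> \<in> R" "D = \<alpha> * \<delta> - \<beta> * \<gamma>" "D \<noteq> 0"
  shows "{a + b * z | a b. a \<in> R \<and> b \<in> R}
           \<subseteq> {a * ((\<alpha> + \<beta> * z) / D) + b * ((\<gamma> + \<delta> * z) / D) | a b. a \<in> R \<and> b \<in> R}"
proof safe
  interpret subring R by fact
  fix a b assume "a \<in> R" "b \<in> R"
  then have "a * \<delta> - b * \<gamma> \<in> R" "b * \<alpha> - a * \<beta> \<in> R"
    using assms(2-5) by (simp_all add: diff_mem mult_mem)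
  moreover have "a + b * z = (a * \<delta> - b * \<gamma>) * ((\<alpha> + \<beta> * z) / D) + (b * \<alpha> - a * \<beta>) * ((\<gamma> + \<delta> * z) / D)"
  proof -
    have "D * (a + b * z) = (a * \<delta> - b * \<gamma>) * (\<alpha> + \<beta> * z) + (b * \<alpha> - a * \<beta>) * (\<gamma> + \<delta> * z)"
      unfolding assms(6) by (simp add: algebra_simps)
    then have "a + b * z = ((a * \<delta> - b * \<gamma>) * (\<alpha> + \<beta> * z) + (b * \<alpha> - a * \<beta>) * (\<gamma> + \<delta> * z)) / D"
      using assms(7) by (metis nonzero_mult_div_cancel_left)
    then show ?thesis by (simp only: times_divide_eq_right flip: add_divide_distrib)
  qed
  ultimately show "\<exists>a' b'. a + b * z = a' * ((\<alpha> + \<beta> * z) / D) + b' * ((\<gamma> + \<delta> * z) / D) \<and> a' \<in> R \<and> b' \<in> R"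
    by blast
qed

lemma pair_combinations_subset_div:
  fixes o1 o2 D :: "'a::field"
  assumes "subring S" "R \<subseteq> S" "o1 \<in> S" "o2 \<in> S"
  shows "{a * (o1 / D) + b * (o2 / D) | a b. a \<in> R \<and> b \<in> R} \<subseteq> (\<lambda>x. x / D) ` S"
proof safe
  interpret subring S by fact
  fix a b assume "a \<in> R" "b \<in> R"
  then have "a * o1 + b * o2 \<in> S" using assms(2-4) by (intro add_mem mult_mem) auto
  moreover have "a * (o1 / D) + b * (o2 / D) = (a * o1 + b * o2) / D" by (simp add: add_divide_distrib)
  ultimately show "a * (o1 / D) + b * (o2 / D) \<in> (\<lambda>x. x / D) ` S" by blast
qed

theorem lemma5p5:
  fixes n :: nat and z o1 o2 \<alpha> \<beta> \<gamma> \<delta> :: complex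
  assumes "n \<ge> 3"
    and "prim_root n z"
    and "o1 \<in> int_adjoin z" and "o1 \<noteq> 0"
    and "o2 \<in> int_adjoin z" and "o2 \<noteq> 0"
    and "\<not> parallel o1 o2"
    and "\<alpha> \<in> int_adjoin (z + cnj z)" and "\<beta> \<in> int_adjoin (z + cnj z)"
    and "\<gamma> \<in> int_adjoin (z + cnj z)" and "\<delta> \<in> int_adjoin (z + cnj z)"
    and "o1 = \<alpha> + \<beta> * z" and "o2 = \<gamma> + \<delta> * z"
  defines "M \<equiv> lin (int_adjoin (z + cnj z))
                  {o1 / (\<alpha> * \<delta> - \<beta> * \<gamma>), o2 / (\<alpha> * \<delta> - \<beta> * \<gamma>)}"
  shows "int_adjoin z \<subseteq> M
    \<and> (\<forall>x\<in>M. \<forall>y\<in>M. x + y \<in> M \<and> - x \<in> M) \<and> 0 \<in> M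
    \<and> (\<forall>x\<in>int_adjoin z. \<forall>y\<in>int_adjoin z. x + y \<in> int_adjoin z \<and> - x \<in> int_adjoin z)
    \<and> 0 \<in> int_adjoin z
    \<and> finite {(\<lambda>x. t + x) ` int_adjoin z | t. t \<in> M}
    \<and> (\<exists>(c::nat) (t::nat \<Rightarrow> complex).
         c \<ge> 1 \<and> t 1 = 0 \<and> (\<forall>i\<in>{1..c}. t i \<in> M)
         \<and> M = (\<Union>i\<in>{1..c}. (\<lambda>x. t i + x) ` int_adjoin z)
         \<and> (\<forall>i\<in>{1..c}. \<forall>j\<in>{1..c}. i \<noteq> j \<longrightarrow>
               ((\<lambda>x. t i + x) ` int_adjoin z) \<inter> ((\<lambda>x. t j + x) ` int_adjoin z) = {})
         \<and> (\<forall>G. G \<subseteq> M \<longrightarrow>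
               G = (\<Union>i\<in>{1..c}. G \<inter> ((\<lambda>x. t i + x) ` int_adjoin z))))"
proof -
  define D where "D = \<alpha> * \<delta> - \<beta> * \<gamma>"
  let ?O = "int_adjoin z" and ?R = "int_adjoin (z + cnj z)"
  interpret O: subring ?O by (rule subring_int_adjoin)
  interpret R: subring ?R by (rule subring_int_adjoin)
  have root: "z ^ n = 1" "0 < n" using assms(1,2) by (auto simp: prim_root_def)
  have R_sub: "?R \<subseteq> ?O" by (rule int_adjoin_trace_subset[OF root])
  have "?R \<subseteq> \<real>" by (intro int_adjoin_subset_Reals) (simp add: complex_add_cnj)
  then have "D \<noteq> 0" unfolding D_def using det_nonzero_if_not_parallel assms(4,7-13) by blast
  moreover have "o1 / D \<noteq> o2 / D"
    using assms(7) \<open>D \<noteq> 0\<close> unfolding parallel_def by (metis divide_cancel_right mult_1 of_real_1)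
  ultimately have M: "M = {a * (o1 / D) + b * (o2 / D) | a b. a \<in> ?R \<and> b \<in> ?R}"
    unfolding M_def D_def[symmetric] by (intro lin_pair R.zero_mem)
  have "?O \<subseteq> M"
    using int_adjoin_subset_trace_combinations[OF root_of_unity_mult_cnj[OF root]]
      cramer_subset_pair_combinations[OF subring_int_adjoin assms(8-11) D_def \<open>D \<noteq> 0\<close>]
    unfolding M assms(12,13) by blast
  have "add_subgroup M" unfolding M by (intro add_subgroup_pair_combinations R.add_subgroup_axioms)
  then interpret M: add_subgroup M .
  have "D \<in> ?O" unfolding D_def using R_sub assms(8-11) by (intro O.diff_mem O.mult_mem) auto
  have "M \<subseteq> (\<lambda>x. x / D) ` ?O"
    unfolding M by (rule pair_combinations_subset_div[OF subring_int_adjoin R_sub assms(3,5)])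
  have finite_cosets: "finite {(+) t ` ?O | t. t \<in> M}"
    by (rule rev_finite_subset[OF finite_cosets_div_int_adjoin[OF root \<open>D \<in> ?O\<close> \<open>D \<noteq> 0\<close>]])
      (use \<open>M \<subseteq> (\<lambda>x. x / D) ` ?O\<close> in blast)
  obtain c :: nat and t where "c \<ge> 1" "t 1 = 0" "\<forall>i\<in>{1..c}. t i \<in> M"
    and M_eq: "M = (\<Union>i\<in>{1..c}. (+) (t i) ` ?O)"
    and "\<forall>i\<in>{1..c}. \<forall>j\<in>{1..c}. i \<noteq> j \<longrightarrow> (+) (t i) ` ?O \<inter> (+) (t j) ` ?O = {}"
    by (rule O.coset_representatives[OF \<open>add_subgroup M\<close> \<open>?O \<subseteq> M\<close> finite_cosets])
  have "\<forall>G. G \<subseteq> M \<longrightarrow> G = (\<Union>i\<in>{1..c}. G \<inter> (+) (t i) ` ?O)" using M_eq by blast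
  have "\<forall>x\<in>M. \<forall>y\<in>M. x + y \<in> M \<and> - x \<in> M" using M.add_mem M.uminus_mem by blast
  have "\<forall>x\<in>?O. \<forall>y\<in>?O. x + y \<in> ?O \<and> - x \<in> ?O" using O.add_mem O.uminus_mem by blast
  have "0 \<in> M" "0 \<in> ?O" by (fact M.zero_mem O.zero_mem)+
  show ?thesis by (intro conjI exI[of _ c] exI[of _ t]; fact)
qed

end
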